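(* Let $\mathbf A\in\mathbb R^{n\times p}$ have columns with $\mathbf 1^T\mathbf a_k=0$ and $\|\mathbf a_k\|_2=1$ for $k=1,\dots,p$, and let $\rho_{ij}=\mathbf a_i^T\mathbf a_j$. Let $\mathbf y\in\mathbb R^n$, let $\mathbf w$ be a weight vector as in the context and $\Delta:=\min\{w_l-w_{l+1}: l=1,\dots,p-1\}$. Let $\widehat{\mathbf x}$ be any minimizer of $\|\mathbf A\mathbf x-\mathbf y\|_1+\Omega_{\mathbf w}(\mathbf x)$ over $\mathbf x\in\mathbb R^p$. Then for every pair $(i,j)$ with $\sqrt{n(2-2\rho_{ij}\operatorname{sign}(\widehat x_i\widehat x_j))}<\Delta$, we have $|\widehat x_i|=|\widehat x_j|$.
   Context: $\mathbf w=(w_1,\dots,w_p)\in\mathbb R^p_+$ satisfies $w_1\ge w_2\ge\cdots\ge w_p\ge0$ and $w_1>0$. The ordered weighted $\ell_1$ (OWL) norm is $\Omega_{\mathbf w}(\mathbf x)=\sum_{i=1}^p w_i|x|_{[i]}$, where $|x|_{[i]}$ denotes the $i$-th largest component of $\mathbf x$ in magnitude. $\mathbf a_k$ is the $k$-th column of $\mathbf A$, $\mathbf 1$ the all-ones vector, $\operatorname{sign}$ the sign function. *)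

theory Defs
  imports Complex_Main
begin

(* Vectors in R^p are functions nat => real, only indices 0..<p matter (0-based).
   Matrices in R^{n x p} are functions nat => nat => real, A r k = entry (row r, column k). *)

definition abs_sorted_desc :: "nat \<Rightarrow> (nat \<Rightarrow> real) \<Rightarrow> real list" where
  "abs_sorted_desc p x = rev (sort (map (\<lambda>k. \<bar>x k\<bar>) [0..<p]))"

definition owl :: "nat \<Rightarrow> (nat \<Rightarrow> real) \<Rightarrow> (nat \<Rightarrow> real) \<Rightarrow> real" where
  "owl p w x = (\<Sum>i<p. w i * (abs_sorted_desc p x ! i))"

definition owl_weights :: "nat \<Rightarrow> (nat \<Rightarrow> real) \<Rightarrow> bool" where
  "owl_weights p w \<longleftrightarrow> 0 < p \<and> (\<forall>i<p. 0 \<le> w i) \<and>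
     (\<forall>i j. i \<le> j \<longrightarrow> j < p \<longrightarrow> w j \<le> w i) \<and> 0 < w 0"

definition owl_gap :: "nat \<Rightarrow> (nat \<Rightarrow> real) \<Rightarrow> real" where
  "owl_gap p w = Min {w l - w (Suc l) | l. Suc l < p}"

definition owl_l1_obj :: "nat \<Rightarrow> nat \<Rightarrow> (nat \<Rightarrow> nat \<Rightarrow> real) \<Rightarrow> (nat \<Rightarrow> real)
     \<Rightarrow> (nat \<Rightarrow> real) \<Rightarrow> (nat \<Rightarrow> real) \<Rightarrow> real" where
  "owl_l1_obj n p A y w x = (\<Sum>r<n. \<bar>(\<Sum>k<p. A r k * x k) - y r\<bar>) + owl p w x"

end

theory Submission
  imports Defs "HOL-Combinatorics.Permutations" "HOL-Analysis.Convex"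
begin

text \<open>If \<open>|x\<^sub>i| > |x\<^sub>j|\<close> at a minimizer, move both magnitudes towards each other by \<open>\<epsilon>\<close>
  (along the sign pattern \<open>s = sgn x\<^sub>i\<close>, \<open>t = sgn x\<^sub>j\<close>). Since \<open>i\<close> precedes \<open>j\<close> in the sorted
  order of magnitudes and consecutive weights drop by at least \<open>\<Delta>\<close>, the rearrangement inequality
  shows that the OWL penalty decreases by at least \<open>\<epsilon>\<Delta>\<close>. The residual changes by
  \<open>\<epsilon>(t a\<^sub>j - s a\<^sub>i)\<close>, whose \<open>\<ell>\<^sub>1\<close> norm is at most
  \<open>\<epsilon>\<surd>n \<parallel>t a\<^sub>j - s a\<^sub>i\<parallel>\<^sub>2 = \<epsilon>\<surd>(n(2 - 2 s t \<rho>\<^sub>i\<^sub>j)) < \<epsilon>\<Delta>\<close>, so the objective strictly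
  decreases.\<close>

definition weighted_sum :: "(nat \<Rightarrow> real) \<Rightarrow> real list \<Rightarrow> real" where
  "weighted_sum w xs = (\<Sum>k<length xs. w k * xs ! k)"

lemma weighted_sum_Cons: "weighted_sum w (a # xs) = w 0 * a + weighted_sum (\<lambda>k. w (Suc k)) xs"
  unfolding weighted_sum_def length_Cons sum.lessThan_Suc_shift by simp

lemma weighted_sum_insort_desc:
  assumes "sorted_wrt (\<ge>) zs" and "\<forall>i j. i \<le> j \<longrightarrow> j \<le> length zs \<longrightarrow> w j \<le> w i"
  shows "w 0 * a + weighted_sum (\<lambda>k. w (Suc k)) zs \<le> weighted_sum w (insort_key uminus a zs)"
  using assms
proof (induction zs arbitrary: w)
  case Nil
  then show ?case by (simp add: weighted_sum_def)
next
  case (Cons z zs)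
  show ?case
  proof (cases "z \<le> a")
    case True
    then show ?thesis by (simp add: weighted_sum_Cons)
  next
    case False
    have "w (Suc 0) * a + weighted_sum (\<lambda>k. w (Suc (Suc k))) zs
        \<le> weighted_sum (\<lambda>k. w (Suc k)) (insort_key uminus a zs)"
      using Cons.IH[of "\<lambda>k. w (Suc k)"] Cons.prems by simp
    moreover have "(w 0 - w (Suc 0)) * (a - z) \<le> 0"
      using Cons.prems(2) False by (intro mult_nonneg_nonpos) auto
    ultimately show ?thesis
      using False by (simp add: weighted_sum_Cons algebra_simps)
  qed
qed

lemma weighted_sum_le_sort_desc:
  assumes "\<forall>i j. i \<le> j \<longrightarrow> j < length xs \<longrightarrow> w j \<le> w i"
  shows "weighted_sum w xs \<le> weighted_sum w (sort_key uminus xs)"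
  using assms
proof (induction xs arbitrary: w)
  case Nil
  then show ?case by simp
next
  case (Cons a xs)
  have "weighted_sum (\<lambda>k. w (Suc k)) xs \<le> weighted_sum (\<lambda>k. w (Suc k)) (sort_key uminus xs)"
    using Cons by simp
  moreover have "sorted_wrt (\<ge>) (sort_key uminus xs)"
    using sorted_sort_key[of uminus xs] by (simp add: sorted_map)
  ultimately show ?case
    using weighted_sum_insort_desc[of "sort_key uminus xs" w a] Cons.prems
    by (simp add: weighted_sum_Cons)
qed

lemma sort_key_uminus: "sort_key uminus xs = rev (sort (xs :: real list))"
proof -
  have "sort xs = rev (sort_key uminus xs)"
    using sorted_sort_key[of uminus xs]
    by (intro properties_for_sort) (auto simp: sorted_map sorted_wrt_rev)
  then show ?thesis by simp
qed

lemma abs_sorted_desc_permutation: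
  obtains \<sigma> where "\<sigma> permutes {..<p}"
    and "\<And>k. k < p \<Longrightarrow> abs_sorted_desc p x ! k = \<bar>x (\<sigma> k)\<bar>"
    and "\<And>k l. k < l \<Longrightarrow> l < p \<Longrightarrow> \<bar>x (\<sigma> l)\<bar> \<le> \<bar>x (\<sigma> k)\<bar>"
proof -
  let ?xs = "map (\<lambda>k. \<bar>x k\<bar>) [0..<p]"
  have "mset (abs_sorted_desc p x) = mset ?xs"
    by (simp add: abs_sorted_desc_def)
  then obtain \<sigma> where \<sigma>: "\<sigma> permutes {..<p}"
      and perm: "permute_list \<sigma> ?xs = abs_sorted_desc p x"
    using mset_eq_permutation[of "abs_sorted_desc p x" ?xs] by auto
  have nth: "abs_sorted_desc p x ! k = \<bar>x (\<sigma> k)\<bar>" if "k < p" for k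
    using perm[symmetric] permute_list_nth[of \<sigma> ?xs k] permutes_in_image[OF \<sigma>] \<sigma> that
    by auto
  have "sorted_wrt (\<ge>) (abs_sorted_desc p x)"
    by (simp add: abs_sorted_desc_def sorted_wrt_rev)
  then have "\<bar>x (\<sigma> l)\<bar> \<le> \<bar>x (\<sigma> k)\<bar>" if "k < l" "l < p" for k l
    using sorted_wrt_nth_less[of "(\<ge>)" "abs_sorted_desc p x" k l] nth that
    by (simp add: abs_sorted_desc_def)
  with \<sigma> nth show thesis by (rule that)
qed

lemma owl_ge_permuted:
  assumes antitone: "\<forall>i j. i \<le> j \<longrightarrow> j < p \<longrightarrow> w j \<le> w i"
    and \<sigma>: "\<sigma> permutes {..<p}"
  shows "(\<Sum>k<p. w k * \<bar>x (\<sigma> k)\<bar>) \<le> owl p w x"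
proof -
  let ?xs = "map (\<lambda>k. \<bar>x k\<bar>) [0..<p]"
  let ?ys = "map (\<lambda>k. \<bar>x (\<sigma> k)\<bar>) [0..<p]"
  have "?ys = permute_list \<sigma> ?xs"
    using permutes_in_image[OF \<sigma>] \<sigma>
    by (intro nth_equalityI) (auto simp: permute_list_nth)
  then have "mset ?ys = mset ?xs"
    using \<sigma> by (simp add: mset_permute_list)
  then have "sort ?xs = sort ?ys"
    by (intro properties_for_sort) simp_all
  then have sorted: "abs_sorted_desc p x = sort_key uminus ?ys"
    by (simp add: abs_sorted_desc_def sort_key_uminus)
  have "(\<Sum>k<p. w k * \<bar>x (\<sigma> k)\<bar>) = weighted_sum w ?ys"
    by (simp add: weighted_sum_def)
  also have "\<dots> \<le> weighted_sum w (sort_key uminus ?ys)"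
    using antitone by (intro weighted_sum_le_sort_desc) simp
  also have "\<dots> = owl p w x"
    by (simp add: owl_def weighted_sum_def flip: sorted) (simp add: abs_sorted_desc_def)
  finally show ?thesis .
qed

lemma owl_gap_le:
  assumes antitone: "\<forall>i j. i \<le> j \<longrightarrow> j < p \<longrightarrow> w j \<le> w i"
    and "a < b" "b < p"
  shows "owl_gap p w \<le> w a - w b"
proof -
  have "finite {w l - w (Suc l) | l. Suc l < p}"
    by (rule finite_image_set) (rule finite_subset[of _ "{..<p}"], auto)
  then have "owl_gap p w \<le> w a - w (Suc a)"
    unfolding owl_gap_def using assms by (intro Min_le) auto
  also have "\<dots> \<le> w a - w b"
    using antitone assms by simp
  finally show ?thesis .
qed

lemma owl_spread_ge_gap:
  assumes antitone: "\<forall>i j. i \<le> j \<longrightarrow> j < p \<longrightarrow> w j \<le> w i"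
    and ij: "i < p" "j < p" and larger: "\<bar>u j\<bar> < \<bar>u i\<bar>"
    and others: "\<forall>k<p. k \<noteq> i \<longrightarrow> k \<noteq> j \<longrightarrow> \<bar>v k\<bar> = \<bar>u k\<bar>"
    and vi: "\<bar>v i\<bar> = \<bar>u i\<bar> + e" and vj: "\<bar>v j\<bar> = \<bar>u j\<bar> - e" and "0 \<le> e"
  shows "owl p w u + e * owl_gap p w \<le> owl p w v"
proof -
  obtain \<sigma> where \<sigma>: "\<sigma> permutes {..<p}"
      and nth: "\<And>k. k < p \<Longrightarrow> abs_sorted_desc p u ! k = \<bar>u (\<sigma> k)\<bar>"
      and desc: "\<And>k l. k < l \<Longrightarrow> l < p \<Longrightarrow> \<bar>u (\<sigma> l)\<bar> \<le> \<bar>u (\<sigma> k)\<bar>"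
    using abs_sorted_desc_permutation[of p u] by blast
  define a where "a = inv \<sigma> i"
  define b where "b = inv \<sigma> j"
  have a: "a < p" "\<sigma> a = i" and b: "b < p" "\<sigma> b = j"
    using ij permutes_inverses(1)[OF \<sigma>] permutes_in_image[OF permutes_inv[OF \<sigma>]]
    by (auto simp: a_def b_def)
  have "a \<noteq> b" using a b larger by auto
  moreover have "\<not> b < a" using desc[of b a] a b larger by auto
  ultimately have ab: "a < b" by simp
  have pointwise: "\<bar>v (\<sigma> k)\<bar> = \<bar>u (\<sigma> k)\<bar> + (if k = a then e else 0) - (if k = b then e else 0)"
    if "k < p" for k
  proof -
    have "\<sigma> k = i \<longleftrightarrow> k = a" "\<sigma> k = j \<longleftrightarrow> k = b"
      using a b that permutes_inj_on[OF \<sigma>] by (auto dest: inj_onD)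
    then show ?thesis
      using others permutes_in_image[OF \<sigma>] that ab vi vj by auto
  qed
  have "(\<Sum>k<p. w k * \<bar>v (\<sigma> k)\<bar>) = (\<Sum>k<p. w k * \<bar>u (\<sigma> k)\<bar>
      + (if k = a then e * w a else 0) - (if k = b then e * w b else 0))"
    by (intro sum.cong) (auto simp: pointwise algebra_simps)
  also have "\<dots> = (\<Sum>k<p. w k * \<bar>u (\<sigma> k)\<bar>) + e * (w a - w b)"
    using a b by (simp add: sum.distrib sum_subtractf algebra_simps)
  finally have "(\<Sum>k<p. w k * \<bar>v (\<sigma> k)\<bar>)
      = (\<Sum>k<p. w k * \<bar>u (\<sigma> k)\<bar>) + e * (w a - w b)" .
  moreover have "owl p w u = (\<Sum>k<p. w k * \<bar>u (\<sigma> k)\<bar>)"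
    by (simp add: owl_def nth)
  moreover have "e * owl_gap p w \<le> e * (w a - w b)"
    using owl_gap_le[OF antitone ab b(1)] \<open>0 \<le> e\<close> by (rule mult_left_mono)
  ultimately show ?thesis
    using owl_ge_permuted[OF antitone \<sigma>, of v] by linarith
qed

lemma l1_residual_add_le:
  fixes A :: "nat \<Rightarrow> nat \<Rightarrow> real" and x d y :: "nat \<Rightarrow> real"
  shows "(\<Sum>r<n. \<bar>(\<Sum>k<p. A r k * (x k + d k)) - y r\<bar>)
     \<le> (\<Sum>r<n. \<bar>(\<Sum>k<p. A r k * x k) - y r\<bar>) + (\<Sum>r<n. \<bar>\<Sum>k<p. A r k * d k\<bar>)"
proof -
  have "\<bar>(\<Sum>k<p. A r k * (x k + d k)) - y r\<bar>
      \<le> \<bar>(\<Sum>k<p. A r k * x k) - y r\<bar> + \<bar>\<Sum>k<p. A r k * d k\<bar>" for r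
    using abs_triangle_ineq[of "(\<Sum>k<p. A r k * x k) - y r" "\<Sum>k<p. A r k * d k"]
    by (simp add: distrib_left sum.distrib algebra_simps)
  then show ?thesis
    by (simp add: sum_mono flip: sum.distrib)
qed

lemma sum_abs_le_sqrt_card_sum_squares:
  fixes v :: "nat \<Rightarrow> real"
  shows "(\<Sum>r<n. \<bar>v r\<bar>) \<le> sqrt (real n * (\<Sum>r<n. (v r)^2))"
proof (rule real_le_rsqrt)
  have "(\<Sum>r<n. \<bar>v r\<bar> * 1)\<^sup>2 \<le> (\<Sum>r<n. \<bar>v r\<bar>\<^sup>2) * (\<Sum>r<n. 1\<^sup>2)"
    by (rule Cauchy_Schwarz_ineq_sum)
  then show "(\<Sum>r<n. \<bar>v r\<bar>)\<^sup>2 \<le> real n * (\<Sum>r<n. (v r)^2)"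
    by (simp add: mult.commute)
qed

lemma sum_squares_signed_diff:
  fixes f g :: "nat \<Rightarrow> real"
  assumes "(\<Sum>r<n. (f r)^2) = 1" "(\<Sum>r<n. (g r)^2) = 1" "s^2 = 1" "t^2 = 1"
  shows "(\<Sum>r<n. (t * g r - s * f r)^2) = 2 - 2 * s * t * (\<Sum>r<n. f r * g r)"
proof -
  have "(\<Sum>r<n. (t * g r - s * f r)^2)
      = t^2 * (\<Sum>r<n. (g r)^2) + s^2 * (\<Sum>r<n. (f r)^2) - 2 * s * t * (\<Sum>r<n. f r * g r)"
    by (simp add: power2_eq_square algebra_simps sum.distrib sum_subtractf sum_distrib_left)
  then show ?thesis using assms by simp
qed

lemma owl_l1_minimizer_abs_le:
  fixes A :: "nat \<Rightarrow> nat \<Rightarrow> real" and y w x :: "nat \<Rightarrow> real"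
  assumes normalized: "\<forall>k<p. (\<Sum>r<n. (A r k)^2) = 1"
    and antitone: "\<forall>i j. i \<le> j \<longrightarrow> j < p \<longrightarrow> w j \<le> w i"
    and minimizer: "\<forall>z. owl_l1_obj n p A y w x \<le> owl_l1_obj n p A y w z"
    and ij: "i < p" "j < p"
    and gap: "sqrt (real n * (2 - 2 * (\<Sum>r<n. A r i * A r j) * sgn (x i * x j))) < owl_gap p w"
  shows "\<bar>x i\<bar> \<le> \<bar>x j\<bar>"
proof (rule ccontr)
  assume "\<not> \<bar>x i\<bar> \<le> \<bar>x j\<bar>"
  then have larger: "\<bar>x j\<bar> < \<bar>x i\<bar>" by simp
  then have "i \<noteq> j" and "x i \<noteq> 0" by auto
  define \<rho> where "\<rho> = (\<Sum>r<n. A r i * A r j)"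
  define s where "s = sgn (x i)"
  \<comment> \<open>if \<open>x j = 0\<close> the direction of the push is free; take the one with \<open>s * t * \<rho> \<ge> 0\<close>\<close>
  define t where "t = (if x j \<noteq> 0 then sgn (x j) else if s * \<rho> \<ge> 0 then 1 else -1 :: real)"
  define e where "e = (\<bar>x i\<bar> - \<bar>x j\<bar>) / 4"
  define d where "d k = (if k = j then e * t else 0) - (if k = i then e * s else 0)" for k
  define x' where "x' k = x k + d k" for k
  have "s^2 = 1" "t^2 = 1" using \<open>x i \<noteq> 0\<close> by (auto simp: s_def t_def sgn_if)
  have signs: "\<rho> * sgn (x i * x j) \<le> s * t * \<rho>"
    using \<open>x i \<noteq> 0\<close> by (auto simp: s_def t_def sgn_mult mult_ac)
  have "0 < e" "e < \<bar>x i\<bar>" using larger by (simp_all add: e_def)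
  have x'i: "\<bar>x' i\<bar> = \<bar>x i\<bar> - e"
    using \<open>i \<noteq> j\<close> \<open>0 < e\<close> \<open>e < \<bar>x i\<bar>\<close>
    by (auto simp: x'_def d_def s_def sgn_if)
  have x'j: "\<bar>x' j\<bar> = \<bar>x j\<bar> + e"
    using \<open>i \<noteq> j\<close> \<open>0 < e\<close>
    by (cases "x j > 0"; cases "x j < 0") (auto simp: x'_def d_def t_def)
  have "\<bar>x' j\<bar> < \<bar>x' i\<bar>"
    unfolding x'i x'j using larger by (simp add: e_def field_simps)
  then have "owl p w x' + e * owl_gap p w \<le> owl p w x"
    using x'i x'j \<open>0 < e\<close>
    by (intro owl_spread_ge_gap[OF antitone ij]) (auto simp: x'_def d_def)
  moreover have "(\<Sum>r<n. \<bar>\<Sum>k<p. A r k * d k\<bar>) < e * owl_gap p w"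
  proof -
    have "(\<Sum>k<p. A r k * d k)
        = (\<Sum>k<p. (if k = j then e * t * A r j else 0) - (if k = i then e * s * A r i else 0))" for r
      by (intro sum.cong) (auto simp: d_def algebra_simps)
    then have "(\<Sum>k<p. A r k * d k) = e * (t * A r j - s * A r i)" for r
      using ij by (simp add: sum_subtractf algebra_simps)
    then have "(\<Sum>r<n. \<bar>\<Sum>k<p. A r k * d k\<bar>) = e * (\<Sum>r<n. \<bar>t * A r j - s * A r i\<bar>)"
      using \<open>0 < e\<close> by (simp add: abs_mult sum_distrib_left)
    also have "\<dots> \<le> e * sqrt (real n * (2 - 2 * s * t * \<rho>))"
      using sum_abs_le_sqrt_card_sum_squares[where v = "\<lambda>r. t * A r j - s * A r i" and n = n]
        sum_squares_signed_diff[where f = "\<lambda>r. A r i" and g = "\<lambda>r. A r j" and n = n]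
        normalized ij \<open>s^2 = 1\<close> \<open>t^2 = 1\<close> \<open>0 < e\<close>
      by (simp add: \<rho>_def)
    also have "\<dots> \<le> e * sqrt (real n * (2 - 2 * \<rho> * sgn (x i * x j)))"
      using signs \<open>0 < e\<close> by (simp add: mult_left_mono)
    also have "\<dots> < e * owl_gap p w"
      using gap \<open>0 < e\<close> by (simp add: \<rho>_def)
    finally show ?thesis .
  qed
  ultimately have "owl_l1_obj n p A y w x' < owl_l1_obj n p A y w x"
    using l1_residual_add_le[where A = A and x = x and d = d and y = y and n = n and p = p] unfolding owl_l1_obj_def x'_def by linarith
  with minimizer show False by (meson not_le)
qed

theorem corollary3:
  fixes n p :: nat and A :: "nat \<Rightarrow> nat \<Rightarrow> real" and y w xhat :: "nat \<Rightarrow> real"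
  assumes centered: "\<forall>k<p. (\<Sum>r<n. A r k) = 0"
    and normalized: "\<forall>k<p. sqrt (\<Sum>r<n. (A r k)^2) = 1"
    and weights: "owl_weights p w"
    and minimizer: "\<forall>x. owl_l1_obj n p A y w xhat \<le> owl_l1_obj n p A y w x"
  shows "\<forall>i<p. \<forall>j<p.
           sqrt (real n * (2 - 2 * (\<Sum>r<n. A r i * A r j) * sgn (xhat i * xhat j))) < owl_gap p w
           \<longrightarrow> \<bar>xhat i\<bar> = \<bar>xhat j\<bar>"
proof (intro allI impI)
  fix i j
  assume ij: "i < p" "j < p"
    and gap: "sqrt (real n * (2 - 2 * (\<Sum>r<n. A r i * A r j) * sgn (xhat i * xhat j))) < owl_gap p w"
  have unit: "\<forall>k<p. (\<Sum>r<n. (A r k)^2) = 1"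
    using normalized by simp
  have antitone: "\<forall>i j. i \<le> j \<longrightarrow> j < p \<longrightarrow> w j \<le> w i"
    using weights by (simp add: owl_weights_def)
  have gap_sym: "sqrt (real n * (2 - 2 * (\<Sum>r<n. A r j * A r i) * sgn (xhat j * xhat i))) < owl_gap p w"
    using gap by (simp add: mult.commute)
  show "\<bar>xhat i\<bar> = \<bar>xhat j\<bar>"
    using owl_l1_minimizer_abs_le[OF unit antitone minimizer ij gap]
      owl_l1_minimizer_abs_le[OF unit antitone minimizer ij(2,1) gap_sym]
    by (rule antisym)
qed

end
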